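(* Let $K$ be a field, let $A=\{{\bf a}_1,\ldots,{\bf a}_n\}\subset\mathbb{Z}^m$ be a vector configuration with $\mathbb{N}A$ pointed, and let $I_A\subset K[x_1,\ldots,x_n]$ be its toric ideal. Let $s\ge 1$ be an integer. Then: (i) There exist toric ideals $I_{A_1},\ldots,I_{A_s}\subset K[x_1,\ldots,x_n]$ with $I_{A_i}\neq I_A$ for every $1\le i\le s$ such that $I_A=I_{A_1}+\cdots+I_{A_s}$ if and only if there exist a set $C\subset \ker_{\mathbb{Z}}(A)$ such that $\{B({\bf u})\mid {\bf u}\in C\}$ is a minimal system of binomial generators of $I_A$, and sets $C_1,\ldots,C_s$ with $C=\bigcup_{i=1}^s C_i$ and $\mathrm{span}_{\mathbb{Q}}(C_i)\subsetneqq \ker_{\mathbb{Q}}(A)$ for every $1\le i\le s$. (ii) There exist toric ideals $I_{A_1},\ldots,I_{A_s}\subset K[x_1,\ldots,x_n]$ with $I_{A_i}\neq I_A$ for every $1\le i\le s$ such that $I_A=\mathrm{rad}(I_{A_1}+\cdots+I_{A_s})$ if and only if there exist a set $C\subset \ker_{\mathbb{Z}}(A)$ such that $\{B({\bf u})\mid {\bf u}\in C\}$ is a minimal system of binomial generators of $I_A$ up to radical, and sets $C_1,\ldots,C_s$ with $C=\bigcup_{i=1}^s C_i$ and $\mathrm{span}_{\mathbb{Q}}(C_i)\subsetneqq \ker_{\mathbb{Q}}(A)$ for every $1\le i\le s$.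
   Context: For a vector configuration $A=\{{\bf a}_1,\ldots,{\bf a}_n\}\subset\mathbb{Z}^m$, $\ker_{\mathbb{Q}}(A)=\{{\bf u}\in\mathbb{Q}^n\mid u_1{\bf a}_1+\cdots+u_n{\bf a}_n={\bf 0}\}$ and $\ker_{\mathbb{Z}}(A)=\ker_{\mathbb{Q}}(A)\cap\mathbb{Z}^n$; $\mathbb{N}A$ is pointed means $\ker_{\mathbb{Z}}(A)\cap\mathbb{N}^n=\{{\bf 0}\}$. The toric ideal $I_A$ is the kernel of the $K$-algebra map $K[x_1,\ldots,x_n]\to K[t_1^{\pm1},\ldots,t_m^{\pm1}]$, $x_i\mapsto {\bf t}^{{\bf a}_i}$; it is generated by the binomials $B({\bf u})={\bf x}^{{\bf u}^+}-{\bf x}^{{\bf u}^-}$, ${\bf u}\in\ker_{\mathbb{Z}}(A)$, where ${\bf u}^+,{\bf u}^-\in\mathbb{N}^n$ are the positive and negative parts of ${\bf u}={\bf u}^+-{\bf u}^-$. A "toric ideal in $K[x_1,\ldots,x_n]$" means $I_{A'}$ for some configuration $A'$ of $n$ vectors in some $\mathbb{Z}^{m'}$ with $\mathbb{N}A'$ pointed. For a set $C\subset\mathbb{Z}^n$, $\mathrm{span}_{\mathbb{Q}}(C)$ is the $\mathbb{Q}$-span of $C$. A set $S$ of binomials is a minimal system of binomial generators of $I_A$ up to radical if $\mathrm{rad}(S)=I_A$ and no proper subset $S'\subsetneqq S$ satisfies $\mathrm{rad}(S')=I_A$; a minimal system of binomial generators of $I_A$ is a set of binomials generating $I_A$ none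 of whose proper subsets generates $I_A$. *)

theory Defs
  imports Complex_Main "HOL-Library.Poly_Mapping"
begin

text \<open>Polynomial ring K[x_v : v in 'v] with a finite variable type 'v (so n = CARD('v)):
  polynomials are finitely supported maps from monomials ('v =>0 nat) to coefficients.\<close>
type_synonym ('v, 'k) mpoly = "('v \<Rightarrow>\<^sub>0 nat) \<Rightarrow>\<^sub>0 'k"

definition ideal_gen :: "'a::comm_ring_1 set \<Rightarrow> 'a set" where
  "ideal_gen S = {(\<Sum>a\<in>t. r a * a) | t r. finite t \<and> t \<subseteq> S}"

definition radical :: "'a::comm_ring_1 set \<Rightarrow> 'a set" where
  "radical I = {f. \<exists>k::nat. f ^ k \<in> I}"

text \<open>A vector configuration A = {a_v} in Z^m: a_v = (A v 0, ..., A v (m-1)), zero beyond m.\<close>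
definition config_in :: "nat \<Rightarrow> ('v \<Rightarrow> nat \<Rightarrow> int) \<Rightarrow> bool" where
  "config_in m A \<longleftrightarrow> (\<forall>v i. m \<le> i \<longrightarrow> A v i = 0)"

definition kerZ :: "('v::finite \<Rightarrow> nat \<Rightarrow> int) \<Rightarrow> ('v \<Rightarrow> int) set" where
  "kerZ A = {u. \<forall>i. (\<Sum>v\<in>UNIV. u v * A v i) = 0}"

definition kerQ :: "('v::finite \<Rightarrow> nat \<Rightarrow> int) \<Rightarrow> ('v \<Rightarrow> rat) set" where
  "kerQ A = {u. \<forall>i. (\<Sum>v\<in>UNIV. u v * of_int (A v i)) = 0}"

definition pointed :: "('v::finite \<Rightarrow> nat \<Rightarrow> int) \<Rightarrow> bool" where
  "pointed A \<longleftrightarrow> (\<forall>u\<in>kerZ A. (\<forall>v. 0 \<le> u v) \<longrightarrow> (\<forall>v. u v = 0))"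

definition spanQ :: "('v \<Rightarrow> int) set \<Rightarrow> ('v \<Rightarrow> rat) set" where
  "spanQ C = {(\<lambda>v. \<Sum>u\<in>t. r u * rat_of_int (u v)) | t r. finite t \<and> t \<subseteq> C}"

definition Adeg :: "('v::finite \<Rightarrow> nat \<Rightarrow> int) \<Rightarrow> ('v \<Rightarrow>\<^sub>0 nat) \<Rightarrow> nat \<Rightarrow> int" where
  "Adeg A \<alpha> = (\<lambda>i. \<Sum>v\<in>UNIV. int (Poly_Mapping.lookup \<alpha> v) * A v i)"

text \<open>Toric ideal: kernel of x_v |-> t^(a_v). The image of p has coefficient at t^e equal to
  the sum of the coefficients of the monomials of A-degree e.\<close>
definition toric_ideal :: "('v::finite \<Rightarrow> nat \<Rightarrow> int) \<Rightarrow> ('v, 'k::field) mpoly set" where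
  "toric_ideal A = {p. \<forall>e. (\<Sum>\<alpha>\<in>{\<alpha>\<in>Poly_Mapping.keys p. Adeg A \<alpha> = e}. Poly_Mapping.lookup p \<alpha>) = 0}"

definition pos_part :: "('v::finite \<Rightarrow> int) \<Rightarrow> ('v \<Rightarrow>\<^sub>0 nat)" where
  "pos_part u = Abs_poly_mapping (\<lambda>v. nat (u v))"

definition neg_part :: "('v::finite \<Rightarrow> int) \<Rightarrow> ('v \<Rightarrow>\<^sub>0 nat)" where
  "neg_part u = Abs_poly_mapping (\<lambda>v. nat (- u v))"

definition binom :: "('v::finite \<Rightarrow> int) \<Rightarrow> ('v, 'k::field) mpoly" where
  "binom u = Poly_Mapping.single (pos_part u) 1 - Poly_Mapping.single (neg_part u) 1"

definition is_toric_ideal :: "('v::finite, 'k::field) mpoly set \<Rightarrow> bool" where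
  "is_toric_ideal I \<longleftrightarrow> (\<exists>m' (A'::'v \<Rightarrow> nat \<Rightarrow> int). config_in m' A' \<and> pointed A' \<and> I = toric_ideal A')"

definition min_binom_gens :: "('v::finite \<Rightarrow> nat \<Rightarrow> int) \<Rightarrow> ('v, 'k::field) mpoly set \<Rightarrow> bool" where
  "min_binom_gens A S \<longleftrightarrow> ideal_gen S = toric_ideal A \<and> (\<forall>S'. S' \<subset> S \<longrightarrow> ideal_gen S' \<noteq> toric_ideal A)"

definition min_binom_gens_rad :: "('v::finite \<Rightarrow> nat \<Rightarrow> int) \<Rightarrow> ('v, 'k::field) mpoly set \<Rightarrow> bool" where
  "min_binom_gens_rad A S \<longleftrightarrow> radical (ideal_gen S) = toric_ideal A \<and>
     (\<forall>S'. S' \<subset> S \<longrightarrow> radical (ideal_gen S') \<noteq> toric_ideal A)"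

end

(*
  Both parts rest on one correspondence: for toric ideals, I_A' \<subseteq> I_A iff
  ker_Z A' \<subseteq> ker_Z A, because B(u) lies in I_A exactly when u \<in> ker_Z A, and every
  toric ideal is generated by finitely many binomials (by Dickson's lemma, applied to the
  minimal pairs of monomials of equal A-degree).

  If I_A = \<Phi>(I_A1 + ... + I_As), with \<Phi> the identity or the radical, pool finite binomial
  generating sets of the I_Ai and thin them out to a minimal subset; this gives C, and
  C_i = C \<inter> ker_Z A_i spans a proper subspace of ker_Q A because ker_Z A_i \<subset> ker_Z A.
  Conversely, if span_Q C_i \<subset> ker_Q A, a rational linear form vanishing on C_i but not on
  ker_Q A, scaled to be integral and appended to A as a new row, gives a pointed
  configuration A_i with C_i \<subseteq> ker_Z A_i \<subset> ker_Z A; the proper toric ideals I_Ai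
  then contain the generators B(u), u \<in> C, and lie inside I_A.
*)
theory Submission
  imports Defs "HOL-Library.Ramsey" "HOL-Library.Function_Algebras"
begin

section \<open>Ideals, radicals and closure operators\<close>

interpretation ring_module: module "(*) :: 'a::comm_ring_1 \<Rightarrow> 'a \<Rightarrow> 'a"
  by unfold_locales (simp_all add: algebra_simps)

\<comment> \<open>as a simp rule, \<open>a * (b * x) = a * b * x\<close> would fight \<open>mult.assoc\<close>\<close>
declare ring_module.scale_scale [simp del]

lemma ideal_gen_eq_span: "ideal_gen S = ring_module.span S"
  unfolding ideal_gen_def ring_module.span_explicit ..

lemma ideal_gen_base: "S \<subseteq> ideal_gen S"
  unfolding ideal_gen_eq_span by (rule ring_module.span_superset)

lemma ideal_gen_mono: "S \<subseteq> T \<Longrightarrow> ideal_gen S \<subseteq> ideal_gen T"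
  unfolding ideal_gen_eq_span by (rule ring_module.span_mono)

lemma ideal_gen_least: "S \<subseteq> ideal_gen T \<Longrightarrow> ideal_gen S \<subseteq> ideal_gen T"
  unfolding ideal_gen_eq_span by (simp add: ring_module.span_minimal)

lemma subset_radical: "J \<subseteq> radical J"
  unfolding radical_def by (auto intro: exI[of _ 1])

lemma radical_mono: "J \<subseteq> K \<Longrightarrow> radical J \<subseteq> radical K"
  unfolding radical_def by auto

lemma radical_radical: "radical (radical J) = radical J"
proof
  show "radical (radical J) \<subseteq> radical J"
    unfolding radical_def by (auto simp flip: power_mult)
qed (rule subset_radical)

lemma subspace_radical:
  fixes J :: "'a::comm_ring_1 set"
  assumes J: "ring_module.subspace J"
  shows "ring_module.subspace (radical J)"
proof (rule ring_module.subspaceI)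
  show "0 \<in> radical J"
    using ring_module.subspace_0[OF J] unfolding radical_def by (auto intro: exI[of _ 1])
  show "c * x \<in> radical J" if x: "x \<in> radical J" for c x
  proof -
    obtain k where "x ^ k \<in> J" using x unfolding radical_def by blast
    then have "(c * x) ^ k \<in> J"
      unfolding power_mult_distrib by (rule ring_module.subspace_scale[OF J])
    then show ?thesis unfolding radical_def by blast
  qed
  show "x + y \<in> radical J" if xy: "x \<in> radical J" "y \<in> radical J" for x y
  proof -
    obtain a b where a: "x ^ a \<in> J" and b: "y ^ b \<in> J"
      using xy unfolding radical_def by blast
    \<comment> \<open>in each term of the binomial expansion, x has exponent at least a or y at least b\<close>
    have "of_nat ((a + b) choose k) * x ^ k * y ^ (a + b - k) \<in> J" for k
    proof (cases "a \<le> k")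
      case True
      then have "x ^ k = x ^ (k - a) * x ^ a"
        by (simp flip: power_add)
      then have "of_nat ((a + b) choose k) * x ^ k * y ^ (a + b - k)
          = (of_nat ((a + b) choose k) * x ^ (k - a) * y ^ (a + b - k)) * x ^ a"
        by (simp only: mult_ac)
      then show ?thesis using ring_module.subspace_scale[OF J a] by simp
    next
      case False
      then have "y ^ (a + b - k) = y ^ (a - k) * y ^ b"
        by (simp flip: power_add)
      then have "of_nat ((a + b) choose k) * x ^ k * y ^ (a + b - k)
          = (of_nat ((a + b) choose k) * x ^ k * y ^ (a - k)) * y ^ b"
        by (simp only: mult_ac)
      then show ?thesis using ring_module.subspace_scale[OF J b] by simp
    qed
    then have "(x + y) ^ (a + b) \<in> J"
      unfolding binomial_ring by (intro ring_module.subspace_sum[OF J])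
    then show ?thesis unfolding radical_def by blast
  qed
qed

text \<open>The two cases of the theorem: \<open>\<Phi> = id\<close> for part (i), \<open>\<Phi> = radical\<close> for part (ii).\<close>

definition ideal_closure :: "('a::comm_ring_1 set \<Rightarrow> 'a set) \<Rightarrow> bool" where
  "ideal_closure \<Phi> \<longleftrightarrow> (\<forall>S. ideal_gen S \<subseteq> \<Phi> (ideal_gen S)) \<and>
     (\<forall>S T. S \<subseteq> \<Phi> (ideal_gen T) \<longrightarrow> \<Phi> (ideal_gen S) \<subseteq> \<Phi> (ideal_gen T))"

lemma ideal_closure_mono:
  assumes "ideal_closure \<Phi>" "S \<subseteq> T"
  shows "\<Phi> (ideal_gen S) \<subseteq> \<Phi> (ideal_gen T)"
  using assms ideal_gen_base unfolding ideal_closure_def by blast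

lemma ideal_closure_least:
  assumes "ideal_closure \<Phi>" "S \<subseteq> \<Phi> (ideal_gen T)"
  shows "\<Phi> (ideal_gen S) \<subseteq> \<Phi> (ideal_gen T)"
  using assms unfolding ideal_closure_def by blast

lemma ideal_closure_id: "ideal_closure (\<lambda>J. J)"
  unfolding ideal_closure_def by (simp add: ideal_gen_least)

lemma ideal_closure_radical: "ideal_closure radical"
  unfolding ideal_closure_def
proof (intro conjI allI impI subset_radical)
  fix S T :: "'a set" assume "S \<subseteq> radical (ideal_gen T)"
  then have "ideal_gen S \<subseteq> radical (ideal_gen T)"
    unfolding ideal_gen_eq_span
    by (intro ring_module.span_minimal subspace_radical ring_module.subspace_span)
  then show "radical (ideal_gen S) \<subseteq> radical (ideal_gen T)"
    using radical_mono radical_radical by metis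
qed

section \<open>Toric ideals and binomials\<close>

definition exp_diff :: "('v \<Rightarrow>\<^sub>0 nat) \<Rightarrow> ('v \<Rightarrow>\<^sub>0 nat) \<Rightarrow> 'v \<Rightarrow> int" where
  "exp_diff \<alpha> \<beta> = (\<lambda>v. int (Poly_Mapping.lookup \<alpha> v) - int (Poly_Mapping.lookup \<beta> v))"

lemma lookup_pos_part [simp]: "Poly_Mapping.lookup (pos_part u) v = nat (u v)"
  unfolding pos_part_def by simp

lemma lookup_neg_part [simp]: "Poly_Mapping.lookup (neg_part u) v = nat (- u v)"
  unfolding neg_part_def by simp

lemma exp_diff_pos_neg_part: "exp_diff (pos_part u) (neg_part u) = u"
  by (simp add: exp_diff_def fun_eq_iff)

lemma Adeg_add: "Adeg A (\<alpha> + \<beta>) i = Adeg A \<alpha> i + Adeg A \<beta> i"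
  by (simp add: Adeg_def lookup_add sum.distrib distrib_right)

lemma Adeg_eq_iff: "Adeg A \<alpha> = Adeg A \<beta> \<longleftrightarrow> exp_diff \<alpha> \<beta> \<in> kerZ A"
proof -
  have diff: "Adeg A \<alpha> i - Adeg A \<beta> i = (\<Sum>v\<in>UNIV. exp_diff \<alpha> \<beta> v * A v i)" for i
    unfolding Adeg_def exp_diff_def by (simp add: sum_subtractf left_diff_distrib)
  show ?thesis
    unfolding kerZ_def fun_eq_iff by (simp flip: diff)
qed

lemma monomial_diff_eq_binom:
  "(Poly_Mapping.single \<alpha> 1 - Poly_Mapping.single \<beta> 1 :: ('v::finite, 'k::field) mpoly) =
     Poly_Mapping.single (\<alpha> - pos_part (exp_diff \<alpha> \<beta>)) 1 * binom (exp_diff \<alpha> \<beta>)"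
proof -
  define \<gamma> where "\<gamma> = \<alpha> - pos_part (exp_diff \<alpha> \<beta>)"
  have "\<gamma> + pos_part (exp_diff \<alpha> \<beta>) = \<alpha>" "\<gamma> + neg_part (exp_diff \<alpha> \<beta>) = \<beta>"
    by (auto intro!: poly_mapping_eqI simp: \<gamma>_def lookup_add lookup_minus exp_diff_def)
  then show ?thesis
    unfolding binom_def \<gamma>_def[symmetric] by (simp add: right_diff_distrib mult_single)
qed

lemma toric_ideal_iff:
  assumes "finite F" "Poly_Mapping.keys p \<subseteq> F"
  shows "p \<in> toric_ideal A \<longleftrightarrow> (\<forall>e. (\<Sum>\<alpha>\<in>{\<alpha>\<in>F. Adeg A \<alpha> = e}. Poly_Mapping.lookup p \<alpha>) = 0)"
proof -
  have "(\<Sum>\<alpha>\<in>{\<alpha>\<in>F. Adeg A \<alpha> = e}. Poly_Mapping.lookup p \<alpha>) =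
      (\<Sum>\<alpha>\<in>{\<alpha>\<in>Poly_Mapping.keys p. Adeg A \<alpha> = e}. Poly_Mapping.lookup p \<alpha>)" for e
    by (rule sum.mono_neutral_right) (use assms in \<open>auto simp: in_keys_iff\<close>)
  then show ?thesis by (simp add: toric_ideal_def)
qed

lemma toric_ideal_diff:
  assumes "p \<in> toric_ideal A" "q \<in> toric_ideal A"
  shows "(p - q :: ('v::finite, 'k::field) mpoly) \<in> toric_ideal A"
proof -
  let ?F = "Poly_Mapping.keys p \<union> Poly_Mapping.keys q"
  have "Poly_Mapping.keys (p - q) \<subseteq> ?F"
    by (auto simp: in_keys_iff lookup_minus)
  moreover have "(\<Sum>\<alpha>\<in>{\<alpha>\<in>?F. Adeg A \<alpha> = e}. Poly_Mapping.lookup r \<alpha>) = 0"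
    if "r \<in> {p, q}" for r e
    using that assms toric_ideal_iff[of ?F r A] by auto
  ultimately show ?thesis
    by (simp add: toric_ideal_iff[of ?F] lookup_minus sum_subtractf)
qed

lemma monomial_diff_in_toric_ideal_iff:
  assumes "c \<noteq> 0"
  shows "(Poly_Mapping.single \<alpha> c - Poly_Mapping.single \<beta> c :: ('v::finite, 'k::field) mpoly)
      \<in> toric_ideal A \<longleftrightarrow> Adeg A \<alpha> = Adeg A \<beta>"
proof (cases "\<alpha> = \<beta>")
  case True
  then show ?thesis by (simp add: toric_ideal_def)
next
  case False
  let ?p = "Poly_Mapping.single \<alpha> c - Poly_Mapping.single \<beta> c :: ('v, 'k) mpoly"
  have keys: "Poly_Mapping.keys ?p \<subseteq> {\<alpha>, \<beta>}"
    by (auto simp: in_keys_iff lookup_minus lookup_single when_def split: if_splits)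
  have "(\<Sum>\<gamma>\<in>{\<gamma>\<in>{\<alpha>, \<beta>}. Adeg A \<gamma> = e}. Poly_Mapping.lookup ?p \<gamma>) =
      (if Adeg A \<alpha> = e then c else 0) - (if Adeg A \<beta> = e then c else 0)" for e
    using False by (subst sum.inter_filter) (auto simp: lookup_minus lookup_single when_def)
  then show ?thesis
    using toric_ideal_iff[OF _ keys] assms by (auto split: if_splits)
qed

lemma binom_in_toric_ideal_iff:
  "(binom u :: ('v::finite, 'k::field) mpoly) \<in> toric_ideal A \<longleftrightarrow> u \<in> kerZ A"
  unfolding binom_def monomial_diff_in_toric_ideal_iff[OF one_neq_zero] Adeg_eq_iff
  by (simp add: exp_diff_pos_neg_part)

lemma toric_ideal_mono:
  assumes "kerZ A' \<subseteq> kerZ A"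
  shows "(toric_ideal A' :: ('v::finite, 'k::field) mpoly set) \<subseteq> toric_ideal A"
proof
  fix p :: "('v, 'k) mpoly" assume p: "p \<in> toric_ideal A'"
  show "p \<in> toric_ideal A" unfolding toric_ideal_def
  proof (intro CollectI allI)
    fix e
    let ?X = "{\<alpha> \<in> Poly_Mapping.keys p. Adeg A \<alpha> = e}"
    \<comment> \<open>the A-degree class splits into A'-degree classes\<close>
    have fibre: "{\<alpha> \<in> ?X. Adeg A' \<alpha> = Adeg A' \<beta>} = {\<alpha> \<in> Poly_Mapping.keys p. Adeg A' \<alpha> = Adeg A' \<beta>}"
      if "\<beta> \<in> ?X" for \<beta>
      using that assms by (auto simp: Adeg_eq_iff)
    have "(\<Sum>\<alpha>\<in>?X. Poly_Mapping.lookup p \<alpha>) =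
        (\<Sum>d\<in>Adeg A' ` ?X. \<Sum>\<alpha>\<in>{\<alpha>\<in>?X. Adeg A' \<alpha> = d}. Poly_Mapping.lookup p \<alpha>)"
      by (rule sum.image_gen) simp
    also have "\<dots> = 0"
    proof (rule sum.neutral, rule ballI)
      fix d assume "d \<in> Adeg A' ` ?X"
      then obtain \<beta> where "\<beta> \<in> ?X" "d = Adeg A' \<beta>" by blast
      then show "(\<Sum>\<alpha>\<in>{\<alpha>\<in>?X. Adeg A' \<alpha> = d}. Poly_Mapping.lookup p \<alpha>) = 0"
        using p fibre unfolding toric_ideal_def by simp
    qed
    finally show "(\<Sum>\<alpha>\<in>?X. Poly_Mapping.lookup p \<alpha>) = 0" .
  qed
qed

lemma toric_ideal_subset_iff:
  "(toric_ideal A' :: ('v::finite, 'k::field) mpoly set) \<subseteq> toric_ideal A \<longleftrightarrow> kerZ A' \<subseteq> kerZ A"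
proof
  assume "(toric_ideal A' :: ('v, 'k) mpoly set) \<subseteq> toric_ideal A"
  then show "kerZ A' \<subseteq> kerZ A"
    using binom_in_toric_ideal_iff[where 'k = 'k] by blast
qed (rule toric_ideal_mono)

lemma toric_ideal_psubset_iff:
  "(toric_ideal A' :: ('v::finite, 'k::field) mpoly set) \<subset> toric_ideal A \<longleftrightarrow> kerZ A' \<subset> kerZ A"
  by (simp add: less_le_not_le toric_ideal_subset_iff)

lemma toric_ideal_ex_same_degree:
  assumes "p \<in> toric_ideal A" "\<alpha> \<in> Poly_Mapping.keys p"
  shows "\<exists>\<beta>\<in>Poly_Mapping.keys p. \<beta> \<noteq> \<alpha> \<and> Adeg A \<beta> = Adeg A \<alpha>"
proof (rule ccontr)
  assume "\<not> ?thesis"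
  then have "{\<beta> \<in> Poly_Mapping.keys p. Adeg A \<beta> = Adeg A \<alpha>} = {\<alpha>}" using assms(2) by blast
  moreover have "(\<Sum>\<beta>\<in>{\<beta> \<in> Poly_Mapping.keys p. Adeg A \<beta> = Adeg A \<alpha>}. Poly_Mapping.lookup p \<beta>) = 0"
    using assms(1) unfolding toric_ideal_def by blast
  ultimately show False using assms(2) by (simp add: in_keys_iff)
qed

lemma toric_ideal_subset_ideal_gen_monomial_diffs:
  "toric_ideal A \<subseteq> ideal_gen
     {Poly_Mapping.single \<alpha> 1 - Poly_Mapping.single \<beta> 1 :: ('v::finite, 'k::field) mpoly
       | \<alpha> \<beta>. Adeg A \<alpha> = Adeg A \<beta>}"
  (is "_ \<subseteq> ideal_gen ?D")
proof
  fix p :: "('v, 'k) mpoly"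
  assume "p \<in> toric_ideal A"
  then show "p \<in> ideal_gen ?D"
  proof (induction "card (Poly_Mapping.keys p)" arbitrary: p rule: less_induct)
    case less
    show ?case
    proof (cases "p = 0")
      case True
      then show ?thesis by (simp add: ideal_gen_eq_span ring_module.span_zero)
    next
      case False
      then obtain \<alpha> where \<alpha>: "\<alpha> \<in> Poly_Mapping.keys p"
        by (metis keys_eq_empty ex_in_conv)
      define c where "c = Poly_Mapping.lookup p \<alpha>"
      have "c \<noteq> 0" using \<alpha> by (simp add: c_def in_keys_iff)
      obtain \<beta> where \<beta>: "\<beta> \<in> Poly_Mapping.keys p" "\<beta> \<noteq> \<alpha>" "Adeg A \<beta> = Adeg A \<alpha>"
        using toric_ideal_ex_same_degree[OF less.prems \<alpha>] by blast
      define q where "q = Poly_Mapping.single \<alpha> c - Poly_Mapping.single \<beta> c"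
      have "q = Poly_Mapping.single 0 c * (Poly_Mapping.single \<alpha> 1 - Poly_Mapping.single \<beta> 1)"
        by (simp add: q_def right_diff_distrib mult_single)
      moreover have "Poly_Mapping.single \<alpha> 1 - Poly_Mapping.single \<beta> 1 \<in> ?D"
        using \<beta>(3) by force
      ultimately have q: "q \<in> ideal_gen ?D"
        unfolding ideal_gen_eq_span by (simp add: ring_module.span_base ring_module.span_scale)
      have "p - q \<in> toric_ideal A"
        by (rule toric_ideal_diff[OF less.prems])
          (simp add: q_def monomial_diff_in_toric_ideal_iff[OF \<open>c \<noteq> 0\<close>] \<beta>(3))
      moreover have "Poly_Mapping.keys (p - q) \<subseteq> Poly_Mapping.keys p - {\<alpha>}"
        using \<alpha> \<beta>
        by (auto simp: q_def c_def in_keys_iff lookup_minus lookup_single when_def split: if_splits)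
      then have "card (Poly_Mapping.keys (p - q)) < card (Poly_Mapping.keys p)"
        using \<alpha> by (intro psubset_card_mono) auto
      ultimately have "p - q \<in> ideal_gen ?D" by (rule less.hyps[rotated])
      then have "(p - q) + q \<in> ideal_gen ?D"
        using q unfolding ideal_gen_eq_span by (rule ring_module.span_add)
      then show ?thesis by simp
    qed
  qed
qed

section \<open>Finite binomial generating sets\<close>

lemma dickson:
  fixes f :: "nat \<Rightarrow> 'w::finite \<Rightarrow> nat"
  shows "\<exists>i j. i < j \<and> f i \<le> f j"
proof (rule ccontr)
  \<comment> \<open>colour \<open>{i, j}\<close> by a coordinate where \<open>f\<close> decreases; Ramsey yields an infinite
    set along which one coordinate decreases strictly\<close>
  assume "\<not> ?thesis"
  then have "\<exists>w. f j w < f i w" if "i < j" for i j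
    using that by (auto simp: le_fun_def not_le)
  then obtain bad where bad: "\<And>i j. i < j \<Longrightarrow> f j (bad i j) < f i (bad i j)"
    by metis
  obtain code :: "'w \<Rightarrow> nat" and n where code: "inj code" "range code = {i. i < n}"
    using finite_imp_inj_to_nat_seg[of "UNIV :: 'w set"] by auto
  define colour where "colour X = code (bad (Min X) (Max X))" for X
  have colours: "\<forall>x\<in>UNIV. \<forall>y\<in>UNIV. x \<noteq> y \<longrightarrow> colour {x, y} < n"
    using code(2) unfolding colour_def by auto
  obtain Y t where Y: "infinite Y" "t < n" "\<forall>x\<in>Y. \<forall>y\<in>Y. x \<noteq> y \<longrightarrow> colour {x, y} = t"
    using Ramsey2[OF infinite_UNIV_nat colours] by auto
  obtain w where w: "code w = t" using Y(2) code(2) by (metis imageE mem_Collect_eq)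
  have decreasing: "f y w < f x w" if "x \<in> Y" "y \<in> Y" "x < y" for x y
  proof -
    have "colour {x, y} = code (bad x y)"
      using \<open>x < y\<close> unfolding colour_def by (simp add: min_def max_def)
    moreover have "colour {x, y} = t" using Y(3) that by auto
    ultimately have "code (bad x y) = code w" using w by simp
    then show ?thesis using bad[OF \<open>x < y\<close>] code(1) by (simp add: inj_eq)
  qed
  obtain y0 where "y0 \<in> Y" using Y(1) by (metis finite.emptyI ex_in_conv)
  then obtain x where x: "x \<in> Y" "\<forall>y\<in>Y. f x w \<le> f y w"
    using ex_has_least_nat[of "\<lambda>y. y \<in> Y" y0 "\<lambda>y. f y w"] by blast
  obtain y where "y \<in> Y" "x < y"
    using Y(1) infinite_nat_iff_unbounded by blast
  then show False using decreasing[OF x(1)] x(2) by fastforce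
qed

definition minimal_elements :: "('a \<Rightarrow> 'w \<Rightarrow> nat) \<Rightarrow> 'a set \<Rightarrow> 'a set" where
  "minimal_elements key X = {x \<in> X. \<forall>y\<in>X. key y \<le> key x \<longrightarrow> y = x}"

lemma finite_minimal_elements:
  fixes key :: "'a \<Rightarrow> 'w::finite \<Rightarrow> nat"
  shows "finite (minimal_elements key X)"
proof (rule ccontr)
  assume "infinite (minimal_elements key X)"
  then obtain g :: "nat \<Rightarrow> 'a" where g: "inj g" "range g \<subseteq> minimal_elements key X"
    using infinite_countable_subset by blast
  obtain i j where "i < j" "key (g i) \<le> key (g j)"
    using dickson[of "key \<circ> g"] by auto
  moreover have "g i \<in> X" "g j \<in> minimal_elements key X"
    using g(2) unfolding minimal_elements_def by auto
  ultimately have "g i = g j" unfolding minimal_elements_def by blast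
  then show False using g(1) \<open>i < j\<close> by (simp add: inj_eq)
qed

text \<open>A pair of monomials \<open>(x^\<alpha>, x^\<beta>)\<close> as one exponent vector, ordered componentwise.\<close>

definition pair_key :: "('v \<Rightarrow>\<^sub>0 nat) \<times> ('v \<Rightarrow>\<^sub>0 nat) \<Rightarrow> 'v + 'v \<Rightarrow> nat" where
  "pair_key p = case_sum (Poly_Mapping.lookup (fst p)) (Poly_Mapping.lookup (snd p))"

lemma pair_key_le_iff:
  "pair_key (\<alpha>, \<beta>) \<le> pair_key (\<alpha>', \<beta>') \<longleftrightarrow>
     Poly_Mapping.lookup \<alpha> \<le> Poly_Mapping.lookup \<alpha>' \<and>
     Poly_Mapping.lookup \<beta> \<le> Poly_Mapping.lookup \<beta>'"
  by (auto simp: pair_key_def le_fun_def split: sum.split)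

lemma inj_pair_key: "inj pair_key"
proof (rule injI)
  fix p q :: "('v \<Rightarrow>\<^sub>0 nat) \<times> ('v \<Rightarrow>\<^sub>0 nat)"
  assume eq: "pair_key p = pair_key q"
  have "Poly_Mapping.lookup (fst p) v = Poly_Mapping.lookup (fst q) v"
    "Poly_Mapping.lookup (snd p) v = Poly_Mapping.lookup (snd q) v" for v
    using fun_cong[OF eq, of "Inl v"] fun_cong[OF eq, of "Inr v"] by (simp_all add: pair_key_def)
  then show "p = q" by (simp add: prod_eq_iff poly_mapping_eqI)
qed

definition degree_pairs :: "('v::finite \<Rightarrow> nat \<Rightarrow> int) \<Rightarrow> (('v \<Rightarrow>\<^sub>0 nat) \<times> ('v \<Rightarrow>\<^sub>0 nat)) set" where
  "degree_pairs A = {(\<alpha>, \<beta>). Adeg A \<alpha> = Adeg A \<beta> \<and> \<alpha> \<noteq> \<beta>}"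

lemma sum_less_sum_if_le_neq:
  fixes f g :: "'w::finite \<Rightarrow> nat"
  assumes "f \<le> g" "f \<noteq> g"
  shows "sum f UNIV < sum g UNIV"
proof -
  obtain x where "f x \<noteq> g x" using assms(2) by auto
  then have "f x < g x" using assms(1) by (simp add: le_fun_def order_less_le)
  then show ?thesis using assms(1) by (intro sum_strict_mono_ex1) (auto simp: le_fun_def)
qed

lemma sum_pair_key_less:
  fixes p q :: "('v::finite \<Rightarrow>\<^sub>0 nat) \<times> ('v \<Rightarrow>\<^sub>0 nat)"
  assumes "pair_key p \<le> pair_key q" "p \<noteq> q"
  shows "sum (pair_key p) UNIV < sum (pair_key q) UNIV"
  using assms inj_pair_key by (intro sum_less_sum_if_le_neq) (auto dest: injD)

lemma degree_pair_residual:
  fixes \<alpha> \<beta> :: "'v::finite \<Rightarrow>\<^sub>0 nat"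
  assumes "(\<alpha>', \<beta>') \<in> degree_pairs A" "pair_key (\<alpha>', \<beta>') \<le> pair_key (\<alpha>, \<beta>)"
    and "Adeg A \<alpha> = Adeg A \<beta>"
  obtains \<delta> \<epsilon> where "\<alpha> = \<delta> + \<alpha>'" "\<beta> = \<beta>' + \<epsilon>" "Adeg A \<delta> = Adeg A \<epsilon>"
    "pair_key (\<delta>, \<epsilon>) \<le> pair_key (\<alpha>, \<beta>)" "(\<delta>, \<epsilon>) \<noteq> (\<alpha>, \<beta>)"
proof -
  define \<delta> \<epsilon> where "\<delta> = \<alpha> - \<alpha>'" and "\<epsilon> = \<beta> - \<beta>'"
  have "Poly_Mapping.lookup \<alpha>' \<le> Poly_Mapping.lookup \<alpha>"
    "Poly_Mapping.lookup \<beta>' \<le> Poly_Mapping.lookup \<beta>"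
    using assms(2) by (simp_all add: pair_key_le_iff)
  then have split: "\<alpha> = \<delta> + \<alpha>'" "\<beta> = \<beta>' + \<epsilon>"
    by (auto intro!: poly_mapping_eqI simp: \<delta>_def \<epsilon>_def lookup_add lookup_minus le_fun_def)
  moreover have "Adeg A \<delta> = Adeg A \<epsilon>"
    using assms(1,3) split unfolding degree_pairs_def by (auto simp: fun_eq_iff Adeg_add)
  moreover have "pair_key (\<delta>, \<epsilon>) \<le> pair_key (\<alpha>, \<beta>)"
    by (simp only: split pair_key_le_iff) (simp add: le_fun_def lookup_add)
  moreover have "(\<delta>, \<epsilon>) \<noteq> (\<alpha>, \<beta>)"
    using split assms(1) by (auto simp: degree_pairs_def)
  ultimately show ?thesis by (rule that)
qed

lemma monomial_diff_in_ideal_gen_minimal_binoms: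
  fixes A :: "'v::finite \<Rightarrow> nat \<Rightarrow> int"
  assumes "Adeg A \<alpha> = Adeg A \<beta>"
  shows "(Poly_Mapping.single \<alpha> 1 - Poly_Mapping.single \<beta> 1 :: ('v, 'k::field) mpoly)
    \<in> ideal_gen (binom ` case_prod exp_diff ` minimal_elements pair_key (degree_pairs A))"
  using assms
proof (induction "sum (pair_key (\<alpha>, \<beta>)) UNIV" arbitrary: \<alpha> \<beta> rule: less_induct)
  case less
  let ?G = "binom ` case_prod exp_diff ` minimal_elements pair_key (degree_pairs A)
    :: ('v, 'k) mpoly set"
  let ?f = "\<lambda>\<alpha> \<beta>. Poly_Mapping.single \<alpha> 1 - Poly_Mapping.single \<beta> 1 :: ('v, 'k) mpoly"
  consider (trivial) "\<alpha> = \<beta>" | (minimal) "(\<alpha>, \<beta>) \<in> minimal_elements pair_key (degree_pairs A)"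
    | (reducible) \<alpha>' \<beta>' where "(\<alpha>', \<beta>') \<in> degree_pairs A"
        "pair_key (\<alpha>', \<beta>') \<le> pair_key (\<alpha>, \<beta>)" "(\<alpha>', \<beta>') \<noteq> (\<alpha>, \<beta>)"
    using less.prems unfolding minimal_elements_def degree_pairs_def by auto
  then show ?case
  proof cases
    case trivial
    then show ?thesis by (simp add: ideal_gen_eq_span ring_module.span_zero)
  next
    case minimal
    then have "binom (exp_diff \<alpha> \<beta>) \<in> ?G" by force
    then show ?thesis
      unfolding monomial_diff_eq_binom[of \<alpha> \<beta>] ideal_gen_eq_span
      by (intro ring_module.span_scale ring_module.span_base)
  next
    case reducible
    have IH1: "?f \<alpha>' \<beta>' \<in> ideal_gen ?G"
      using less.hyps[OF sum_pair_key_less[OF reducible(2,3)]] reducible(1)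
      by (simp add: degree_pairs_def)
    obtain \<delta> \<epsilon> where split: "\<alpha> = \<delta> + \<alpha>'" "\<beta> = \<beta>' + \<epsilon>"
      and "Adeg A \<delta> = Adeg A \<epsilon>" "pair_key (\<delta>, \<epsilon>) \<le> pair_key (\<alpha>, \<beta>)"
        "(\<delta>, \<epsilon>) \<noteq> (\<alpha>, \<beta>)"
      using degree_pair_residual[OF reducible(1,2) less.prems] .
    then have IH2: "?f \<delta> \<epsilon> \<in> ideal_gen ?G"
      by (intro less.hyps sum_pair_key_less)
    have "?f \<alpha> \<beta> = Poly_Mapping.single \<delta> 1 * ?f \<alpha>' \<beta>' + Poly_Mapping.single \<beta>' 1 * ?f \<delta> \<epsilon>"
      by (simp add: split right_diff_distrib mult_single add.commute)
    then show ?thesis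
      using IH1 IH2 by (simp add: ideal_gen_eq_span ring_module.span_add ring_module.span_scale)
  qed
qed

lemma ex_finite_binomial_generators:
  "\<exists>F. finite F \<and> F \<subseteq> kerZ A \<and>
     (toric_ideal A :: ('v::finite, 'k::field) mpoly set) \<subseteq> ideal_gen (binom ` F)"
proof (intro exI conjI)
  let ?F = "case_prod exp_diff ` minimal_elements pair_key (degree_pairs A)"
  show "finite ?F" by (simp add: finite_minimal_elements)
  show "?F \<subseteq> kerZ A" by (auto simp: minimal_elements_def degree_pairs_def Adeg_eq_iff)
  have "(toric_ideal A :: ('v, 'k) mpoly set) \<subseteq>
      ideal_gen {Poly_Mapping.single \<alpha> 1 - Poly_Mapping.single \<beta> 1 | \<alpha> \<beta>. Adeg A \<alpha> = Adeg A \<beta>}"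
    by (rule toric_ideal_subset_ideal_gen_monomial_diffs)
  also have "\<dots> \<subseteq> ideal_gen (binom ` ?F)"
    by (rule ideal_gen_least) (auto intro: monomial_diff_in_ideal_gen_minimal_binoms)
  finally show "(toric_ideal A :: ('v, 'k) mpoly set) \<subseteq> ideal_gen (binom ` ?F)" .
qed

section \<open>Separating integral linear forms\<close>

interpretation field_vector_space: vector_space "(*) :: 'a::field \<Rightarrow> 'a \<Rightarrow> 'a"
  by unfold_locales (simp_all add: algebra_simps)

lemma (in vector_space) ex_linear_functional_separating:
  assumes "w \<notin> span S"
  shows "\<exists>g. Vector_Spaces.linear scale (*) g \<and> (\<forall>x\<in>S. g x = 0) \<and> g w = 1"
proof -
  interpret vector_space_pair scale "(*) :: 'a \<Rightarrow> 'a \<Rightarrow> 'a" ..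
  obtain B where B: "B \<subseteq> span S" "independent B" "span S \<subseteq> span B"
    by (rule maximal_independent_subset)
  have "span B \<subseteq> span S" by (rule span_minimal[OF B(1) subspace_span])
  then have "w \<notin> span B" using assms by blast
  then have "independent (insert w B)" using B(2) by (rule independent_insertI)
  then obtain g where g: "Vector_Spaces.linear scale (*) g"
    "\<forall>x\<in>insert w B. g x = (if x = w then 1 else 0)"
    using linear_independent_extend[of _ "\<lambda>x. if x = w then 1 else 0"] by blast
  have "g x = 0" if "x \<in> B" for x
  proof -
    have "x \<noteq> w" using that \<open>w \<notin> span B\<close> span_base by blast
    then show ?thesis using g(2) that by simp
  qed
  then have "g x = 0" if "x \<in> span S" for x
    using linear_eq_0_on_span[OF g(1)] that B(3) by blast
  moreover have "g w = 1" using g(2) by simp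
  ultimately show ?thesis using g(1) span_base by blast
qed

lemma sum_fun_apply: "sum f A x = (\<Sum>a\<in>A. f a x)"
  by (induction A rule: infinite_finite_induct) auto

interpretation rat_fun: vector_space "\<lambda>(c::rat) (x::'v \<Rightarrow> rat) v. c * x v"
  by unfold_locales (simp_all add: fun_eq_iff algebra_simps)

declare rat_fun.scale_scale [simp del]

lemma ex_integer_multiple:
  fixes x :: "'v::finite \<Rightarrow> rat"
  shows "\<exists>d u. d > 0 \<and> (\<forall>v. rat_of_int d * x v = rat_of_int (u v))"
proof -
  define den where "den v = snd (quotient_of (x v))" for v
  define d where "d = (\<Prod>v\<in>UNIV. den v)"
  have den_pos: "den v > 0" for v unfolding den_def by (rule quotient_of_denom_pos')
  have "rat_of_int d * x v \<in> \<int>" for v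
  proof -
    obtain a where "quotient_of (x v) = (a, den v)"
      unfolding den_def by (metis prod.collapse)
    then have xv: "x v = rat_of_int a / rat_of_int (den v)" by (rule quotient_of_div)
    have "d = den v * (\<Prod>w\<in>UNIV - {v}. den w)"
      unfolding d_def by (simp add: prod.remove)
    then have "rat_of_int d * x v = rat_of_int (a * (\<Prod>w\<in>UNIV - {v}. den w))"
      using den_pos[of v] by (simp add: xv)
    then show ?thesis by (simp only: Ints_of_int)
  qed
  then have "\<forall>v. \<exists>k. rat_of_int d * x v = rat_of_int k"
    by (blast elim: Ints_cases)
  then have "\<exists>u. \<forall>v. rat_of_int d * x v = rat_of_int (u v)"
    by (rule choice)
  moreover have "d > 0" unfolding d_def using den_pos by (simp add: prod_pos)
  ultimately show ?thesis by blast
qed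

lemma ex_integer_multiple_linear_functional:
  fixes g :: "('v::finite \<Rightarrow> rat) \<Rightarrow> rat"
  assumes "Vector_Spaces.linear (\<lambda>c x v. c * x v) (*) g"
  shows "\<exists>d \<psi>. d > 0 \<and> (\<forall>x. rat_of_int d * g x = (\<Sum>v\<in>UNIV. x v * rat_of_int (\<psi> v)))"
proof -
  interpret vector_space_pair "\<lambda>(c::rat) (x::'v \<Rightarrow> rat) v. c * x v" "(*) :: rat \<Rightarrow> rat \<Rightarrow> rat" ..
  define e where "e v = (\<lambda>w. if w = v then 1 else 0 :: rat)" for v :: 'v
  have coordinates: "g x = (\<Sum>v\<in>UNIV. x v * g (e v))" for x
  proof -
    have "x = (\<Sum>v\<in>UNIV. (\<lambda>w. x v * e v w))"
      by (simp add: fun_eq_iff sum_fun_apply e_def if_distrib cong: if_cong)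
    then have "g x = (\<Sum>v\<in>UNIV. g (\<lambda>w. x v * e v w))"
      by (subst (1) \<open>x = _\<close>) (rule linear_sum[OF assms])
    also have "\<dots> = (\<Sum>v\<in>UNIV. x v * g (e v))"
      using linear_scale[OF assms] by simp
    finally show ?thesis .
  qed
  obtain d \<psi> where "d > 0" and \<psi>: "\<forall>v. rat_of_int d * g (e v) = rat_of_int (\<psi> v)"
    using ex_integer_multiple[of "\<lambda>v. g (e v)"] by blast
  have "rat_of_int d * g x = (\<Sum>v\<in>UNIV. x v * rat_of_int (\<psi> v))" for x
    unfolding coordinates[of x] sum_distrib_left
    by (rule sum.cong[OF refl]) (simp add: mult.left_commute[of "rat_of_int d"] \<psi>)
  then show ?thesis using \<open>d > 0\<close> by blast
qed

lemma kerZ_iff_kerQ: "u \<in> kerZ A \<longleftrightarrow> (\<lambda>v. rat_of_int (u v)) \<in> kerQ A"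
  unfolding kerZ_def kerQ_def by (simp flip: of_int_mult of_int_sum)

lemma subspace_kerQ: "rat_fun.subspace (kerQ A)"
  unfolding rat_fun.subspace_def kerQ_def
  by (auto simp: sum.distrib distrib_right mult.assoc simp flip: sum_distrib_left)

lemma spanQ_eq_span: "spanQ C = rat_fun.span ((\<lambda>u v. rat_of_int (u v)) ` C)"
  (is "_ = rat_fun.span (?h ` C)")
proof
  show "spanQ C \<subseteq> rat_fun.span (?h ` C)"
  proof
    fix x assume "x \<in> spanQ C"
    then obtain t r where t: "finite t" "t \<subseteq> C" and x: "x = (\<lambda>v. \<Sum>u\<in>t. r u * rat_of_int (u v))"
      unfolding spanQ_def by blast
    have "x = (\<Sum>u\<in>t. (\<lambda>v. r u * rat_of_int (u v)))"
      unfolding x by (simp add: fun_eq_iff sum_fun_apply)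
    also have "\<dots> \<in> rat_fun.span (?h ` C)"
    proof (rule rat_fun.span_sum)
      fix u assume "u \<in> t"
      then have "?h u \<in> rat_fun.span (?h ` C)" using t(2) by (intro rat_fun.span_base) auto
      then show "(\<lambda>v. r u * rat_of_int (u v)) \<in> rat_fun.span (?h ` C)"
        by (rule rat_fun.span_scale)
    qed
    finally show "x \<in> rat_fun.span (?h ` C)" .
  qed
  show "rat_fun.span (?h ` C) \<subseteq> spanQ C"
  proof
    fix x assume "x \<in> rat_fun.span (?h ` C)"
    then obtain t r where t: "finite t" "t \<subseteq> ?h ` C" and x: "x = (\<Sum>a\<in>t. (\<lambda>v. r a * a v))"
      unfolding rat_fun.span_explicit by blast
    obtain t0 where t0: "t0 \<subseteq> C" "t = ?h ` t0" using t(2) by (auto simp: subset_image_iff)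
    have inj: "inj_on ?h t0" by (auto intro!: inj_onI simp: fun_eq_iff)
    then have "finite t0" using t(1) t0(2) finite_image_iff by blast
    have "x = (\<lambda>v. \<Sum>u\<in>t0. r (?h u) * rat_of_int (u v))"
      unfolding x t0(2) by (simp add: sum.reindex[OF inj] fun_eq_iff sum_fun_apply)
    then show "x \<in> spanQ C" unfolding spanQ_def using t0(1) \<open>finite t0\<close>
      by (intro CollectI exI[of _ t0] exI[of _ "\<lambda>u. r (?h u)"]) simp
  qed
qed

lemma spanQ_subset_kerQ: "C \<subseteq> kerZ A \<Longrightarrow> spanQ C \<subseteq> kerQ A"
  unfolding spanQ_eq_span by (rule rat_fun.span_minimal) (auto simp: kerZ_iff_kerQ subspace_kerQ)

lemma spanQ_psubset_kerQ:
  assumes "C \<subseteq> kerZ A'" "kerZ A' \<subset> kerZ A"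
  shows "spanQ C \<subset> kerQ A"
proof -
  obtain u where "u \<in> kerZ A" "u \<notin> kerZ A'" using assms(2) by blast
  then have "(\<lambda>v. rat_of_int (u v)) \<in> kerQ A - kerQ A'" by (simp add: kerZ_iff_kerQ)
  moreover have "spanQ C \<subseteq> kerQ A'" "spanQ C \<subseteq> kerQ A"
    using assms by (auto intro!: spanQ_subset_kerQ)
  ultimately show ?thesis by blast
qed

lemma ex_integer_functional_separating:
  fixes A :: "'v::finite \<Rightarrow> nat \<Rightarrow> int"
  assumes "spanQ C \<subset> kerQ A"
  shows "\<exists>\<psi>. (\<forall>u\<in>C. (\<Sum>v\<in>UNIV. u v * \<psi> v) = 0) \<and> (\<exists>u\<in>kerZ A. (\<Sum>v\<in>UNIV. u v * \<psi> v) \<noteq> 0)"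
proof -
  interpret vector_space_pair "\<lambda>(c::rat) (x::'v \<Rightarrow> rat) v. c * x v" "(*) :: rat \<Rightarrow> rat \<Rightarrow> rat" ..
  let ?h = "\<lambda>u v. rat_of_int (u v)"
  obtain w where w: "w \<in> kerQ A" "w \<notin> rat_fun.span (?h ` C)"
    using assms unfolding spanQ_eq_span by blast
  obtain g where g: "Vector_Spaces.linear (\<lambda>c x v. c * x v) (*) g" "\<forall>x\<in>?h ` C. g x = 0" "g w = 1"
    using rat_fun.ex_linear_functional_separating[OF w(2)] by blast
  obtain d \<psi> where "d > 0" and \<psi>: "\<And>x. rat_of_int d * g x = (\<Sum>v\<in>UNIV. x v * rat_of_int (\<psi> v))"
    using ex_integer_multiple_linear_functional[OF g(1)] by blast
  have pairing: "rat_of_int (\<Sum>v\<in>UNIV. u v * \<psi> v) = rat_of_int d * g (?h u)" for u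
    by (simp add: \<psi>)
  obtain e u where "e > 0" and u: "\<And>v. rat_of_int e * w v = rat_of_int (u v)"
    using ex_integer_multiple[of w] by blast
  have hu: "?h u = (\<lambda>v. rat_of_int e * w v)" using u by simp
  then have "u \<in> kerZ A"
    unfolding kerZ_iff_kerQ using rat_fun.subspace_scale[OF subspace_kerQ w(1)] by simp
  moreover have "(\<Sum>v\<in>UNIV. u v * \<psi> v) \<noteq> 0"
    using pairing[of u] linear_scale[OF g(1), of "rat_of_int e" w] g(3) hu \<open>d > 0\<close> \<open>e > 0\<close>
    by (auto simp del: of_int_sum of_int_mult)
  moreover have "(\<Sum>v\<in>UNIV. u v * \<psi> v) = 0" if "u \<in> C" for u
    using pairing[of u] g(2) that by (simp del: of_int_sum of_int_mult)
  ultimately show ?thesis by blast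
qed

text \<open>Row \<open>m\<close> of a configuration in \<open>\<int>\<^sup>m\<close> is zero; \<open>extend_config\<close> puts \<open>\<psi>\<close> there.\<close>

definition extend_config :: "('v \<Rightarrow> nat \<Rightarrow> int) \<Rightarrow> nat \<Rightarrow> ('v \<Rightarrow> int) \<Rightarrow> 'v \<Rightarrow> nat \<Rightarrow> int" where
  "extend_config A m \<psi> = (\<lambda>v i. if i = m then \<psi> v else A v i)"

lemma kerZ_extend_config:
  assumes "config_in m A"
  shows "kerZ (extend_config A m \<psi>) = {u \<in> kerZ A. (\<Sum>v\<in>UNIV. u v * \<psi> v) = 0}"
proof (intro set_eqI iffI)
  have row: "(\<Sum>v\<in>UNIV. u v * extend_config A m \<psi> v i) =
      (if i = m then (\<Sum>v\<in>UNIV. u v * \<psi> v) else (\<Sum>v\<in>UNIV. u v * A v i))" for u i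
    by (cases "i = m") (simp_all add: extend_config_def)
  fix u
  show "u \<in> kerZ (extend_config A m \<psi>)" if "u \<in> {u \<in> kerZ A. (\<Sum>v\<in>UNIV. u v * \<psi> v) = 0}"
    using that by (simp add: kerZ_def row)
  assume u: "u \<in> kerZ (extend_config A m \<psi>)"
  have "(\<Sum>v\<in>UNIV. u v * A v i) = 0" for i
  proof (cases "i = m")
    case True
    then show ?thesis using assms by (simp add: config_in_def)
  next
    case False
    then show ?thesis using u row[of u i] by (simp add: kerZ_def)
  qed
  moreover have "(\<Sum>v\<in>UNIV. u v * \<psi> v) = 0" using u row[of u m] by (simp add: kerZ_def)
  ultimately show "u \<in> {u \<in> kerZ A. (\<Sum>v\<in>UNIV. u v * \<psi> v) = 0}" by (simp add: kerZ_def)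
qed

lemma ex_pointed_config_between:
  assumes "config_in m A" "pointed A" "C \<subseteq> kerZ A" "spanQ C \<subset> kerQ A"
  shows "\<exists>A'. config_in (Suc m) A' \<and> pointed A' \<and> C \<subseteq> kerZ A' \<and> kerZ A' \<subset> kerZ A"
proof -
  obtain \<psi> where \<psi>: "\<forall>u\<in>C. (\<Sum>v\<in>UNIV. u v * \<psi> v) = 0" "\<exists>u\<in>kerZ A. (\<Sum>v\<in>UNIV. u v * \<psi> v) \<noteq> 0"
    using ex_integer_functional_separating[OF assms(4)] by blast
  let ?A' = "extend_config A m \<psi>"
  have ker: "kerZ ?A' = {u \<in> kerZ A. (\<Sum>v\<in>UNIV. u v * \<psi> v) = 0}"
    by (rule kerZ_extend_config[OF assms(1)])
  have "config_in (Suc m) ?A'" using assms(1) unfolding config_in_def extend_config_def by simp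
  moreover have "pointed ?A'" using assms(2) ker unfolding pointed_def by blast
  moreover have "C \<subseteq> kerZ ?A'" using assms(3) \<psi>(1) ker by blast
  moreover have "kerZ ?A' \<subset> kerZ A" using \<psi>(2) ker by blast
  ultimately show ?thesis by blast
qed

section \<open>Decompositions of toric ideals\<close>

lemma finite_ex_minimal_subset:
  assumes "finite G" "P G"
  shows "\<exists>S\<subseteq>G. P S \<and> (\<forall>S'. S' \<subset> S \<longrightarrow> \<not> P S')"
  using assms
proof (induction G rule: finite_psubset_induct)
  case (psubset G)
  show ?case
  proof (cases "\<exists>S'\<subset>G. P S'")
    case True
    then obtain S' where "S' \<subset> G" "P S'" by blast
    with psubset.IH show ?thesis by (meson order.trans psubset_imp_subset)
  next
    case False
    with psubset.prems show ?thesis by blast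
  qed
qed

lemma ex_finite_binomial_generators_Union:
  fixes B :: "'i \<Rightarrow> 'v::finite \<Rightarrow> nat \<Rightarrow> int"
  assumes "finite J"
  shows "\<exists>F. finite F \<and> F \<subseteq> (\<Union>i\<in>J. kerZ (B i)) \<and>
     ideal_gen ((binom :: _ \<Rightarrow> ('v, 'k::field) mpoly) ` F) = ideal_gen (\<Union>i\<in>J. toric_ideal (B i))"
proof -
  have "\<forall>i\<in>J. \<exists>F. finite F \<and> F \<subseteq> kerZ (B i) \<and>
      (toric_ideal (B i) :: ('v, 'k) mpoly set) \<subseteq> ideal_gen (binom ` F)"
    using ex_finite_binomial_generators by blast
  then obtain F where F: "\<forall>i\<in>J. finite (F i) \<and> F i \<subseteq> kerZ (B i) \<and>
      (toric_ideal (B i) :: ('v, 'k) mpoly set) \<subseteq> ideal_gen (binom ` F i)"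
    by (rule bchoice[elim_format]) blast
  let ?F = "\<Union>i\<in>J. F i"
  have "(binom :: _ \<Rightarrow> ('v, 'k) mpoly) ` ?F \<subseteq> (\<Union>i\<in>J. toric_ideal (B i))"
    using F binom_in_toric_ideal_iff by blast
  moreover have "(\<Union>i\<in>J. toric_ideal (B i)) \<subseteq> ideal_gen ((binom :: _ \<Rightarrow> ('v, 'k) mpoly) ` ?F)"
    using F ideal_gen_mono[of "binom ` F _" "binom ` ?F"] by blast
  ultimately have
    "ideal_gen ((binom :: _ \<Rightarrow> ('v, 'k) mpoly) ` ?F) = ideal_gen (\<Union>i\<in>J. toric_ideal (B i))"
    by (intro equalityI ideal_gen_mono ideal_gen_least)
  moreover have "finite ?F" "?F \<subseteq> (\<Union>i\<in>J. kerZ (B i))" using F assms by auto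
  ultimately show ?thesis by blast
qed

lemma split_generators_of_toric_decomposition:
  fixes A :: "'v::finite \<Rightarrow> nat \<Rightarrow> int" and I :: "'i \<Rightarrow> ('v, 'k::field) mpoly set"
  assumes \<Phi>: "ideal_closure \<Phi>" and "finite J"
    and toric: "\<forall>i\<in>J. is_toric_ideal (I i) \<and> I i \<noteq> toric_ideal A"
    and decomp: "toric_ideal A = \<Phi> (ideal_gen (\<Union>i\<in>J. I i))"
  shows "\<exists>C Cs. C \<subseteq> kerZ A \<and>
    (\<Phi> (ideal_gen (binom ` C)) = toric_ideal A \<and>
     (\<forall>S'. S' \<subset> binom ` C \<longrightarrow> \<Phi> (ideal_gen S') \<noteq> toric_ideal A)) \<and>
    C = (\<Union>i\<in>J. Cs i) \<and> (\<forall>i\<in>J. spanQ (Cs i) \<subset> kerQ A)"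
proof -
  have "\<forall>i\<in>J. \<exists>B. I i = toric_ideal (B :: 'v \<Rightarrow> nat \<Rightarrow> int)"
    using toric unfolding is_toric_ideal_def by blast
  then obtain B where B: "\<forall>i\<in>J. I i = toric_ideal (B i)"
    by (rule bchoice[elim_format]) blast
  have "I i \<subseteq> toric_ideal A" if "i \<in> J" for i
  proof -
    have "I i \<subseteq> ideal_gen (\<Union>i\<in>J. I i)" using that ideal_gen_base by blast
    also have "\<dots> \<subseteq> toric_ideal A" using \<Phi> unfolding decomp ideal_closure_def by blast
    finally show ?thesis .
  qed
  then have ker: "kerZ (B i) \<subset> kerZ A" if "i \<in> J" for i
    using that toric B by (auto simp flip: toric_ideal_psubset_iff[where 'k = 'k])
  have "(\<Union>i\<in>J. I i) = (\<Union>i\<in>J. toric_ideal (B i))" using B by simp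
  then obtain F where F: "finite F" "F \<subseteq> (\<Union>i\<in>J. kerZ (B i))"
    "ideal_gen ((binom :: _ \<Rightarrow> ('v, 'k) mpoly) ` F) = ideal_gen (\<Union>i\<in>J. I i)"
    using ex_finite_binomial_generators_Union[OF \<open>finite J\<close>, of B] by auto
  obtain S where S: "S \<subseteq> binom ` F" "\<Phi> (ideal_gen S) = toric_ideal A"
    "\<forall>S'. S' \<subset> S \<longrightarrow> \<Phi> (ideal_gen S') \<noteq> toric_ideal A"
    using finite_ex_minimal_subset[of "binom ` F" "\<lambda>S. \<Phi> (ideal_gen S) = toric_ideal A"] F decomp
    by auto
  obtain C where C: "C \<subseteq> F" "S = binom ` C" using S(1) by (auto simp: subset_image_iff)
  have "C \<subseteq> kerZ A" "C = (\<Union>i\<in>J. C \<inter> kerZ (B i))" using C(1) F(2) ker by auto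
  moreover have "spanQ (C \<inter> kerZ (B i)) \<subset> kerQ A" if "i \<in> J" for i
    using ker[OF that] by (intro spanQ_psubset_kerQ) auto
  ultimately show ?thesis
    using S C(2) by (intro exI[of _ C] exI[of _ "\<lambda>i. C \<inter> kerZ (B i)"]) simp
qed

lemma toric_decomposition_of_split_generators:
  fixes A :: "'v::finite \<Rightarrow> nat \<Rightarrow> int" and \<Phi> :: "('v, 'k::field) mpoly set \<Rightarrow> ('v, 'k) mpoly set"
  assumes "config_in m A" "pointed A" "ideal_closure \<Phi>"
    and C: "C \<subseteq> kerZ A" "\<Phi> (ideal_gen (binom ` C)) = toric_ideal A"
    and Cs: "C = (\<Union>i\<in>J. Cs i)" "\<forall>i\<in>J. spanQ (Cs i) \<subset> kerQ A"
  shows "\<exists>I. (\<forall>i\<in>J. is_toric_ideal (I i) \<and> I i \<noteq> toric_ideal A) \<and>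
    toric_ideal A = \<Phi> (ideal_gen (\<Union>i\<in>J. I i))"
proof -
  have "\<exists>B. config_in (Suc m) B \<and> pointed B \<and> Cs i \<subseteq> kerZ B \<and> kerZ B \<subset> kerZ A" if "i \<in> J" for i
  proof (rule ex_pointed_config_between[OF assms(1,2)])
    show "Cs i \<subseteq> kerZ A" using that C(1) Cs(1) by blast
    show "spanQ (Cs i) \<subset> kerQ A" using that Cs(2) by blast
  qed
  then obtain B where B: "\<And>i. i \<in> J \<Longrightarrow> config_in (Suc m) (B i) \<and> pointed (B i) \<and>
      Cs i \<subseteq> kerZ (B i) \<and> kerZ (B i) \<subset> kerZ A"
    by metis
  define I where "I i = (toric_ideal (B i) :: ('v, 'k) mpoly set)" for i
  have proper: "is_toric_ideal (I i) \<and> I i \<noteq> toric_ideal A" if "i \<in> J" for i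
    using B[OF that] toric_ideal_psubset_iff[of "B i" A, where 'k = 'k]
    unfolding is_toric_ideal_def I_def by blast
  have gens: "binom ` C \<subseteq> (\<Union>i\<in>J. I i)"
  proof
    fix x :: "('v, 'k) mpoly" assume "x \<in> binom ` C"
    then obtain i u where "i \<in> J" "u \<in> Cs i" "x = binom u" using Cs(1) by blast
    then show "x \<in> (\<Union>i\<in>J. I i)" using B unfolding I_def by (auto simp: binom_in_toric_ideal_iff)
  qed
  have "I i \<subseteq> toric_ideal A" if "i \<in> J" for i
    using B[OF that] unfolding I_def by (intro toric_ideal_mono) blast
  then have within: "(\<Union>i\<in>J. I i) \<subseteq> \<Phi> (ideal_gen (binom ` C))" unfolding C(2) by blast
  have "\<Phi> (ideal_gen (\<Union>i\<in>J. I i)) \<subseteq> toric_ideal A"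
    using ideal_closure_least[OF assms(3) within] by (simp only: C(2))
  moreover have "toric_ideal A \<subseteq> \<Phi> (ideal_gen (\<Union>i\<in>J. I i))"
    using ideal_closure_mono[OF assms(3) gens] C(2) by simp
  ultimately show ?thesis using proper by blast
qed

lemma proper_toric_decomposition_iff:
  fixes A :: "'v::finite \<Rightarrow> nat \<Rightarrow> int" and \<Phi> :: "('v, 'k::field) mpoly set \<Rightarrow> ('v, 'k) mpoly set"
  assumes "config_in m A" "pointed A" "finite J" "ideal_closure \<Phi>"
  shows "(\<exists>I. (\<forall>i\<in>J. is_toric_ideal (I i) \<and> I i \<noteq> toric_ideal A) \<and>
       toric_ideal A = \<Phi> (ideal_gen (\<Union>i\<in>J. I i)))
    \<longleftrightarrow> (\<exists>C Cs. C \<subseteq> kerZ A \<and>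
       (\<Phi> (ideal_gen (binom ` C)) = toric_ideal A \<and>
        (\<forall>S'. S' \<subset> binom ` C \<longrightarrow> \<Phi> (ideal_gen S') \<noteq> toric_ideal A)) \<and>
       C = (\<Union>i\<in>J. Cs i) \<and> (\<forall>i\<in>J. spanQ (Cs i) \<subset> kerQ A))"
    (is "?decomposition \<longleftrightarrow> ?split")
proof
  assume ?decomposition
  then show ?split
    by (elim exE conjE) (rule split_generators_of_toric_decomposition[OF assms(4,3)])
next
  assume ?split
  then show ?decomposition
    by (elim exE conjE) (rule toric_decomposition_of_split_generators[OF assms(1,2,4)])
qed

theorem theorem2p1:
  fixes A :: "'v::finite \<Rightarrow> nat \<Rightarrow> int" and m s :: nat
  assumes "config_in m A" and "pointed A" and "1 \<le> s"
  shows
   "((\<exists>I :: nat \<Rightarrow> ('v, 'k::field) mpoly set.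
        (\<forall>i\<in>{1..s}. is_toric_ideal (I i) \<and> I i \<noteq> toric_ideal A) \<and>
        toric_ideal A = ideal_gen (\<Union>i\<in>{1..s}. I i))
     \<longleftrightarrow>
     (\<exists>C Cs. C \<subseteq> kerZ A \<and> min_binom_gens A ((binom :: _ \<Rightarrow> ('v, 'k) mpoly) ` C) \<and>
        C = (\<Union>i\<in>{1..s}. Cs i) \<and> (\<forall>i\<in>{1..s}. spanQ (Cs i) \<subset> kerQ A)))
    \<and>
    ((\<exists>I :: nat \<Rightarrow> ('v, 'k) mpoly set.
        (\<forall>i\<in>{1..s}. is_toric_ideal (I i) \<and> I i \<noteq> toric_ideal A) \<and>
        toric_ideal A = radical (ideal_gen (\<Union>i\<in>{1..s}. I i)))
     \<longleftrightarrow>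
     (\<exists>C Cs. C \<subseteq> kerZ A \<and> min_binom_gens_rad A ((binom :: _ \<Rightarrow> ('v, 'k) mpoly) ` C) \<and>
        C = (\<Union>i\<in>{1..s}. Cs i) \<and> (\<forall>i\<in>{1..s}. spanQ (Cs i) \<subset> kerQ A)))"
  using proper_toric_decomposition_iff[OF assms(1,2) finite_atLeastAtMost ideal_closure_id]
    proper_toric_decomposition_iff[OF assms(1,2) finite_atLeastAtMost ideal_closure_radical]
  unfolding min_binom_gens_def min_binom_gens_rad_def
  by (intro conjI) simp_all

end
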